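(* Suppose $w$ induces the triangulation $Z$ and let $a>0$ be a constant as in the following fact: for all sufficiently small $\delta$ and all $x\in P_\Sigma$, $\{m\in A:\rho_m(x)>\delta^a\}$ is the vertex set of a simplex of $Z$. Then for all sufficiently small $\delta>0$ and every $\epsilon$ with $\delta^a\le\epsilon<1/|\Delta|$, $$P_\Sigma=\bigcup_{S\in Z}U^S_\epsilon .$$
   Context: Let $M\cong\mathbb{Z}^2$, $\Delta\subset M_{\mathbb{R}}$ a 2-dimensional lattice polygon, $A=\Delta\cap M$, $|\Delta|$ the number of points of $A$, $P_\Sigma$ the projective toric surface of the normal fan of $\Delta$ with torus $(\mathbb{C}^* )^2$, $s_m(x)=x^m$. For $w\in\mathbb{Z}^A$, $\delta\in(0,1)$: $\rho_m=\delta^{2w_m}|s_m|^2/\sum_{m'\in A}\delta^{2w_{m'}}|s_{m'}|^2$, $\rho_S=\sum_{m\in S}\rho_m$. We say $w$ induces the triangulation $Z$ if $Z$ is a triangulation of $\Delta$ with vertex set $A$, triangles containing no other lattice points, such that for every simplex $\sigma$ of $Z$ there is an affine $\ell_\sigma$ with $w_m=\ell_\sigma(m)$ on vertices of $\sigma$ and $w_m>\ell_\sigma(m)$ for other $m\in A$; simplices (of all dimensions) are identified with their vertex sets $S$. For $S\in Z$: $U^S_\epsilon=\{x\in P_\Sigma:\rho_S(x)>1-|\Delta|\epsilon,\ \rho_m(x)>\epsilon\ \text{for all } m\in S\}$. *)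

theory Defs
  imports "HOL-Analysis.Analysis"
begin

definition rpt :: "int \<times> int \<Rightarrow> real \<times> real" where
  "rpt m = (of_int (fst m), of_int (snd m))"

definition polygon :: "(int \<times> int) set \<Rightarrow> (real \<times> real) set" where
  "polygon V = convex hull (rpt ` V)"

definition lattice_points :: "(real \<times> real) set \<Rightarrow> (int \<times> int) set" where
  "lattice_points D = {m. rpt m \<in> D}"

definition monomial :: "complex \<times> complex \<Rightarrow> int \<times> int \<Rightarrow> complex" where
  "monomial x m = fst x powi fst m * snd x powi snd m"

text \<open>The projective toric surface P_Sigma, realised as the closure of the image of the
  torus under x \<mapsto> [x^m]_{m in A} in projective space. A point is represented by a
  nonzero homogeneous coordinate vector z (supported on A) lying in the closure of the
  affine cone over the torus image.\<close>
definition toric_surface :: "(int \<times> int) set \<Rightarrow> ((int \<times> int) \<Rightarrow> complex) set" where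
  "toric_surface A = {z. (\<forall>m. m \<notin> A \<longrightarrow> z m = 0) \<and> (\<exists>m\<in>A. z m \<noteq> 0) \<and>
     (\<exists>lam :: nat \<Rightarrow> complex. \<exists>t :: nat \<Rightarrow> complex \<times> complex.
        (\<forall>k. lam k \<noteq> 0 \<and> fst (t k) \<noteq> 0 \<and> snd (t k) \<noteq> 0) \<and>
        (\<forall>m\<in>A. (\<lambda>k. lam k * monomial (t k) m) \<longlonglongrightarrow> z m))}"

definition rho :: "real \<Rightarrow> (int \<times> int \<Rightarrow> int) \<Rightarrow> (int \<times> int) set \<Rightarrow> int \<times> int
                    \<Rightarrow> (int \<times> int \<Rightarrow> complex) \<Rightarrow> real" where
  "rho \<delta> w A m z = \<delta> powi (2 * w m) * (cmod (z m))\<^sup>2 /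
       (\<Sum>m'\<in>A. \<delta> powi (2 * w m') * (cmod (z m'))\<^sup>2)"

definition rhoS :: "real \<Rightarrow> (int \<times> int \<Rightarrow> int) \<Rightarrow> (int \<times> int) set \<Rightarrow> (int \<times> int) set
                    \<Rightarrow> (int \<times> int \<Rightarrow> complex) \<Rightarrow> real" where
  "rhoS \<delta> w A S z = (\<Sum>m\<in>S. rho \<delta> w A m z)"

definition U_set :: "real \<Rightarrow> (int \<times> int \<Rightarrow> int) \<Rightarrow> (int \<times> int) set \<Rightarrow> (int \<times> int) set
                    \<Rightarrow> real \<Rightarrow> (int \<times> int \<Rightarrow> complex) set" where
  "U_set \<delta> w A S \<epsilon> = {z \<in> toric_surface A. rhoS \<delta> w A S z > 1 - real (card A) * \<epsilon> \<and>
       (\<forall>m\<in>S. rho \<delta> w A m z > \<epsilon>)}"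

text \<open>Simplices of all dimensions are identified
  with their (nonempty) vertex sets.\<close>
definition is_lattice_triangulation :: "(real \<times> real) set \<Rightarrow> (int \<times> int) set set \<Rightarrow> bool" where
  "is_lattice_triangulation D Z \<longleftrightarrow>
     finite Z \<and>
     (\<forall>S\<in>Z. S \<noteq> {} \<and> finite S \<and> \<not> affine_dependent (rpt ` S)) \<and>
     (\<forall>S\<in>Z. \<forall>T. T \<subseteq> S \<and> T \<noteq> {} \<longrightarrow> T \<in> Z) \<and>
     (\<forall>S\<in>Z. \<forall>T\<in>Z. convex hull (rpt ` S) \<inter> convex hull (rpt ` T) = convex hull (rpt ` (S \<inter> T))) \<and>
     (\<Union>S\<in>Z. convex hull (rpt ` S)) = D \<and>
     \<Union>Z = lattice_points D \<and>
     (\<forall>S\<in>Z. card S = 3 \<longrightarrow> lattice_points (convex hull (rpt ` S)) = S)"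

definition induces_triangulation :: "(real \<times> real) set \<Rightarrow> (int \<times> int \<Rightarrow> int) \<Rightarrow> (int \<times> int) set set \<Rightarrow> bool" where
  "induces_triangulation D w Z \<longleftrightarrow> is_lattice_triangulation D Z \<and>
     (\<forall>S\<in>Z. \<exists>c0 c1 c2 :: real.
        (\<forall>m\<in>S. real_of_int (w m) = c0 + c1 * fst (rpt m) + c2 * snd (rpt m)) \<and>
        (\<forall>m\<in>lattice_points D - S. real_of_int (w m) > c0 + c1 * fst (rpt m) + c2 * snd (rpt m)))"

end

theory Submission
  imports Defs
begin

text \<open>The weights \<open>\<rho>\<^sub>m(x)\<close> form a probability vector on \<open>A\<close>. Hence for
  \<open>\<epsilon> < 1/|\<Delta>|\<close> the set \<open>S\<close> of indices with \<open>\<rho>\<^sub>m(x) > \<epsilon>\<close> is nonempty and carries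
  mass \<open>\<rho>\<^sub>S(x) > 1 - |\<Delta>|\<epsilon>\<close>, i.e. \<open>x \<in> U\<^sup>S\<^sub>\<epsilon>\<close>. Since \<open>\<epsilon> \<ge> \<delta>\<^sup>a\<close>, \<open>S\<close> lies inside
  the simplex \<open>{m. \<rho>\<^sub>m(x) > \<delta>\<^sup>a}\<close> of \<open>Z\<close>, so it is itself a face of \<open>Z\<close>. The shape of
  \<open>\<Delta>\<close> and the weights \<open>w\<close> enter only through this assumed simplex property.\<close>

lemma is_lattice_triangulation_face:
  assumes "is_lattice_triangulation D Z" "S \<in> Z" "T \<subseteq> S" "T \<noteq> {}"
  shows "T \<in> Z"
proof -
  have "\<forall>S\<in>Z. \<forall>T. T \<subseteq> S \<and> T \<noteq> {} \<longrightarrow> T \<in> Z"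
    using assms(1) unfolding is_lattice_triangulation_def by (elim conjE)
  then show ?thesis using assms(2-4) by blast
qed

lemma is_lattice_triangulation_finite_lattice_points:
  assumes "is_lattice_triangulation D Z"
  shows "finite (lattice_points D)"
proof -
  have "finite Z" "\<forall>S\<in>Z. S \<noteq> {} \<and> finite S \<and> \<not> affine_dependent (rpt ` S)"
      "\<Union>Z = lattice_points D"
    using assms by (simp_all add: is_lattice_triangulation_def)
  then show ?thesis by (metis finite_Union)
qed

lemma sum_rho_eq_1:
  assumes "finite A" "z \<in> toric_surface A" "\<delta> > 0"
  shows "(\<Sum>m\<in>A. rho \<delta> w A m z) = 1"
proof -
  define f where "f m = \<delta> powi (2 * w m) * (cmod (z m))\<^sup>2" for m
  from assms(2) obtain m0 where m0: "m0 \<in> A" "z m0 \<noteq> 0"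
    unfolding toric_surface_def by blast
  have "f m0 > 0"
    unfolding f_def using m0 assms(3) by simp
  moreover have "f m \<ge> 0" for m
    unfolding f_def using assms(3) by simp
  ultimately have "sum f A > 0"
    using sum_pos2[OF assms(1) m0(1)] by blast
  moreover have "(\<Sum>m\<in>A. rho \<delta> w A m z) = sum f A / sum f A"
    unfolding rho_def f_def by (rule sum_divide_distrib[symmetric])
  ultimately show ?thesis by simp
qed

lemma sum_superlevel_set_gt:
  fixes p :: "'a \<Rightarrow> real"
  assumes "finite A" "(\<Sum>m\<in>A. p m) = 1" "\<epsilon> > 0" "real (card A) * \<epsilon> < 1"
  defines "S \<equiv> {m\<in>A. p m > \<epsilon>}"
  shows "S \<noteq> {}" and "(\<Sum>m\<in>S. p m) > 1 - real (card A) * \<epsilon>"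
proof -
  have SA: "S \<subseteq> A" unfolding S_def by blast
  have small: "(\<Sum>m\<in>B. p m) \<le> real (card B) * \<epsilon>" if "B \<subseteq> A - S" for B
    using sum_bounded_above[of B p \<epsilon>] that unfolding S_def by force
  show ne: "S \<noteq> {}"
  proof
    assume "S = {}"
    then have "(\<Sum>m\<in>A. p m) \<le> real (card A) * \<epsilon>" using small[of A] by simp
    then show False using assms(2,4) by simp
  qed
  have "finite S" using SA assms(1) by (rule finite_subset)
  then have "card S > 0" using ne by (simp add: card_gt_0_iff)
  then have "card (A - S) < card A"
    using card_Diff_subset[OF \<open>finite S\<close> SA] card_mono[OF assms(1) SA] by linarith
  then have "real (card (A - S)) * \<epsilon> < real (card A) * \<epsilon>"
    using assms(3) by simp
  moreover have "(\<Sum>m\<in>A. p m) = (\<Sum>m\<in>S. p m) + (\<Sum>m\<in>A - S. p m)"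
    using sum.subset_diff[OF SA assms(1)] by (simp add: add.commute)
  ultimately show "(\<Sum>m\<in>S. p m) > 1 - real (card A) * \<epsilon>"
    using small[of "A - S"] assms(2) by simp
qed

lemma mem_U_set_superlevel_set:
  fixes w :: "int \<times> int \<Rightarrow> int"
  assumes "finite A" "z \<in> toric_surface A" "\<delta> > 0" "\<epsilon> > 0" "real (card A) * \<epsilon> < 1"
  defines "S \<equiv> {m\<in>A. rho \<delta> w A m z > \<epsilon>}"
  shows "S \<noteq> {}" and "z \<in> U_set \<delta> w A S \<epsilon>"
  using sum_superlevel_set_gt[OF assms(1) sum_rho_eq_1[OF assms(1-3)] assms(4,5)] assms(2)
  unfolding S_def U_set_def rhoS_def by auto

theorem proposition3p3:
  fixes V :: "(int \<times> int) set" and w :: "int \<times> int \<Rightarrow> int"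
    and Z :: "(int \<times> int) set set" and a :: real
    and \<Delta> :: "(real \<times> real) set" and A :: "(int \<times> int) set"
  assumes "finite V" and "\<Delta> = polygon V" and "interior \<Delta> \<noteq> {}"
    and "A = lattice_points \<Delta>"
    and "induces_triangulation \<Delta> w Z"
    and "a > 0"
    and "\<exists>\<delta>0>0. \<forall>\<delta>. 0 < \<delta> \<and> \<delta> < \<delta>0 \<longrightarrow>
           (\<forall>z\<in>toric_surface A. {m\<in>A. rho \<delta> w A m z > \<delta> powr a} \<in> Z)"
  shows "\<exists>\<delta>1>0. \<forall>\<delta>. 0 < \<delta> \<and> \<delta> < \<delta>1 \<longrightarrow>
           (\<forall>\<epsilon>. \<delta> powr a \<le> \<epsilon> \<and> \<epsilon> < 1 / real (card A) \<longrightarrow>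
              toric_surface A = (\<Union>S\<in>Z. U_set \<delta> w A S \<epsilon>))"
proof -
  obtain \<delta>0 where "\<delta>0 > 0" and simplex: "\<And>\<delta> z. 0 < \<delta> \<Longrightarrow> \<delta> < \<delta>0 \<Longrightarrow> z \<in> toric_surface A \<Longrightarrow>
      {m\<in>A. rho \<delta> w A m z > \<delta> powr a} \<in> Z"
    using assms(7) by blast
  have tri: "is_lattice_triangulation \<Delta> Z"
    using assms(5) unfolding induces_triangulation_def by blast
  have "finite A"
    using is_lattice_triangulation_finite_lattice_points[OF tri] assms(4) by simp
  have "toric_surface A \<subseteq> (\<Union>S\<in>Z. U_set \<delta> w A S \<epsilon>)"
    if \<delta>: "0 < \<delta>" "\<delta> < \<delta>0" and \<epsilon>: "\<delta> powr a \<le> \<epsilon>" "\<epsilon> < 1 / real (card A)" for \<delta> \<epsilon>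
  proof
    fix z assume z: "z \<in> toric_surface A"
    have "\<epsilon> > 0"
      using \<delta>(1) \<epsilon>(1) powr_gt_zero[of \<delta> a] by linarith
    moreover have "real (card A) * \<epsilon> < 1"
      using \<epsilon>(2) \<open>\<epsilon> > 0\<close> by (cases "card A = 0") (auto simp: field_simps)
    ultimately have S: "{m\<in>A. rho \<delta> w A m z > \<epsilon>} \<noteq> {}"
        "z \<in> U_set \<delta> w A {m\<in>A. rho \<delta> w A m z > \<epsilon>} \<epsilon>"
      using mem_U_set_superlevel_set[OF \<open>finite A\<close> z \<delta>(1)] by blast+
    have "{m\<in>A. rho \<delta> w A m z > \<epsilon>} \<subseteq> {m\<in>A. rho \<delta> w A m z > \<delta> powr a}"
      using \<epsilon>(1) by auto
    then have "{m\<in>A. rho \<delta> w A m z > \<epsilon>} \<in> Z"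
      using is_lattice_triangulation_face[OF tri simplex[OF \<delta> z]] S(1) by blast
    then show "z \<in> (\<Union>S\<in>Z. U_set \<delta> w A S \<epsilon>)" using S(2) by blast
  qed
  moreover have "(\<Union>S\<in>Z. U_set \<delta> w A S \<epsilon>) \<subseteq> toric_surface A" for \<delta> \<epsilon>
    unfolding U_set_def by blast
  ultimately show ?thesis
    using \<open>\<delta>0 > 0\<close> by (intro exI[of _ \<delta>0]) blast
qed

end
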